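(* Let $\Omega$ be a circle domain with $\infty\in\Omega$, let $\{\gamma_j\}$ be its boundary circles, $B_j$ the open disk bounded by $\gamma_j$ with $B_j\cap\Omega=\emptyset$, and $R_j$ the reflection across $\gamma_j$. For $k\ge0$ let $\Omega_k=\bigcup_{l(T)\le k}T(\Omega)$, the union over $T\in\Gamma(\Omega)$ of length at most $k$. Then for each $k\ge0$: $$\overline{\Omega_k}=\bigcup_{l(T)\le k}T(\overline\Omega),\qquad \partial\Omega_k=\bigcup_{l(T)\le k}T(\partial\Omega),$$ $$\widehat{\mathbb C}\setminus\overline{\Omega_k}=\bigcup R_{i_1}\circ\dots\circ R_{i_k}(B_{i_{k+1}}),$$ where the last union is over all sequences $i_1,\dots,i_{k+1}$ with $i_j\ne i_{j+1}$ (for $k=0$ it is $\bigcup_jB_j$), and the sets in this union are pairwise disjoint for distinct such sequences. Moreover, for each sequence $i_1,\dots,i_{k+2}$ with consecutive indices distinct, the closure of $R_{i_1}\circ\dots\circ R_{i_{k+1}}(B_{i_{k+2}})$ is contained in $R_{i_1}\circ\dots\circ R_{i_k}(B_{i_{k+1}})$ (for $k=0$: $\overline{R_{i_1}(B_{i_2})}\subset B_{i_1}$).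
   Context: A circle domain is a domain in $\widehat{\mathbb C}$ each boundary component of which is a geometric circle or a point. The Schottky group $\Gamma(\Omega)$ is the group of Möbius and anti-Möbius maps generated by the reflections $R_j$. Every $T\in\Gamma(\Omega)$, $T\ne\mathrm{id}$, can be written uniquely in reduced form $T=R_{i_1}\circ\dots\circ R_{i_k}$ with $i_j\ne i_{j+1}$; its length is $l(T)=k$, and $l(\mathrm{id})=0$. *)

theory Defs
  imports "HOL-Analysis.Analysis"
begin

text \<open>The Riemann sphere is modelled as complex option, None being the point at infinity.
  Its topology is the pullback of the Euclidean topology of R^3 under the inverse
  stereographic projection (an injective map onto the unit sphere).\<close>

type_synonym riemann = "complex option"

definition stereo :: "riemann \<Rightarrow> real \<times> real \<times> real" where
  "stereo p = (case p of
      None \<Rightarrow> (0, 0, 1)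
    | Some z \<Rightarrow> (2 * Re z / (1 + (cmod z)^2), 2 * Im z / (1 + (cmod z)^2),
                 ((cmod z)^2 - 1) / ((cmod z)^2 + 1)))"

definition sphtop :: "riemann topology" where
  "sphtop = pullback_topology UNIV stereo euclidean"

definition geom_circle :: "riemann set \<Rightarrow> bool" where
  "geom_circle C \<longleftrightarrow>
     (\<exists>c r. r > 0 \<and> C = Some ` sphere c r) \<or>
     (\<exists>a b. b \<noteq> 0 \<and> C = insert None (Some ` {a + of_real t * b | t. True}))"

definition boundary_components :: "riemann set \<Rightarrow> riemann set set" where
  "boundary_components \<Omega> = connected_components_of (subtopology sphtop (sphtop frontier_of \<Omega>))"

definition circle_domain :: "riemann set \<Rightarrow> bool" where
  "circle_domain \<Omega> \<longleftrightarrow> openin sphtop \<Omega> \<and> connectedin sphtop \<Omega> \<and> \<Omega> \<noteq> {} \<and>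
     (\<forall>K \<in> boundary_components \<Omega>. geom_circle K \<or> (\<exists>p. K = {p}))"

text \<open>Boundary circles (Euclidean, since infinity lies in the domain) are indexed by
  (center, radius).\<close>
definition circ_index :: "riemann set \<Rightarrow> (complex \<times> real) set" where
  "circ_index \<Omega> = {(c, r). r > 0 \<and> Some ` sphere c r \<in> boundary_components \<Omega>}"

definition disk :: "complex \<times> real \<Rightarrow> riemann set" where
  "disk i = Some ` ball (fst i) (snd i)"

definition refl :: "complex \<times> real \<Rightarrow> riemann \<Rightarrow> riemann" where
  "refl i p = (case p of
      None \<Rightarrow> Some (fst i)
    | Some z \<Rightarrow> (if z = fst i then None
                 else Some (fst i + complex_of_real ((snd i)^2) / cnj (z - fst i))))"

definition word_map :: "(complex \<times> real) list \<Rightarrow> riemann \<Rightarrow> riemann" where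
  "word_map ws = foldr (\<lambda>i f. refl i \<circ> f) ws id"

definition reduced_word :: "(complex \<times> real) set \<Rightarrow> (complex \<times> real) list \<Rightarrow> bool" where
  "reduced_word J ws \<longleftrightarrow> set ws \<subseteq> J \<and> successively (\<noteq>) ws"

definition Omega_k :: "riemann set \<Rightarrow> nat \<Rightarrow> riemann set" where
  "Omega_k \<Omega> k = \<Union>{word_map ws ` \<Omega> | ws. reduced_word (circ_index \<Omega>) ws \<and> length ws \<le> k}"

end

(* The boundary circles of Omega bound pairwise disjoint closed disks outside Omega, and every
   point outside the closure of Omega lies in one of their open disks B_j: in the plane, the
   complementary component of Omega containing such a point is enclosed by its own frontier, which
   is connected and therefore lies in a single boundary component, a point or a circle.
   The reflections then play ping-pong: a reduced word maps everything outside the closed disk of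
   its last letter into the open disk of its first letter.  Comparing two reduced words after their
   longest common prefix shows that the tiles T(Omega) are pairwise disjoint and that the
   generation-k disks T(B_i), l(T) = k, are pairwise disjoint and miss Omega_k.  Since B_i is
   covered by R_i(closure Omega) and the sets R_i(B_j), j <> i, induction on k shows that the
   closures of the tiles of length at most k together with the generation-k disks cover the sphere.
   The generation-k disks are open and every T is a homeomorphism, which determines the closure,
   the frontier and the complement of Omega_k. *)

theory Submission
  imports Defs
begin

section \<open>Plane topology\<close>

lemma bounded_Compl_iff_eventually_at_infinity:
  fixes V :: "'a::real_normed_vector set"
  shows "bounded (- V) \<longleftrightarrow> (\<forall>\<^sub>F z in at_infinity. z \<in> V)"
proof
  assume "bounded (- V)"
  then obtain b where b: "\<And>z. z \<notin> V \<Longrightarrow> norm z \<le> b"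
    by (auto simp: bounded_iff)
  have "\<forall>z. b + 1 \<le> norm z \<longrightarrow> z \<in> V"
  proof (intro allI impI)
    fix z :: 'a
    assume "b + 1 \<le> norm z"
    then show "z \<in> V"
      using b by force
  qed
  then show "\<forall>\<^sub>F z in at_infinity. z \<in> V"
    unfolding eventually_at_infinity by blast
next
  assume "\<forall>\<^sub>F z in at_infinity. z \<in> V"
  then obtain b where "\<And>z. b \<le> norm z \<Longrightarrow> z \<in> V"
    unfolding eventually_at_infinity by blast
  then have "- V \<subseteq> cball 0 b"
    by (force simp: not_le)
  then show "bounded (- V)"
    using bounded_cball bounded_subset by blast
qed

lemma open_iff_eventually_nhds:
  "open S \<longleftrightarrow> (\<forall>z\<in>S. \<forall>\<^sub>F w in nhds z. w \<in> S)"
  by (metis eventually_nhds open_subopen subsetI eventually_nhds_in_open)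

lemma subset_convex_if_frontier_subset:
  fixes C K :: "'a::euclidean_space set"
  assumes "2 \<le> DIM('a)" "bounded C" "bounded K" "convex K" "frontier C \<subseteq> K"
  shows "C \<subseteq> K"
proof (rule ccontr)
  assume "\<not> C \<subseteq> K"
  then have "- K \<inter> C \<noteq> {}"
    by blast
  moreover have "- K \<inter> frontier C = {}"
    using assms(5) by blast
  ultimately have "- K \<subseteq> C"
    using connected_Int_frontier[OF connected_complement_bounded_convex[OF assms(3,4,1)]]
    by blast
  then have "bounded (- K)"
    using assms(2) bounded_subset by blast
  then have "bounded (K \<union> - K)"
    using assms(3) by (simp only: bounded_Un simp_thms)
  then show False
    by (simp only: Compl_partition not_bounded_UNIV)
qed

lemma frontier_part_surrounding_point:
  fixes V :: "'a::euclidean_space set"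
  assumes "2 \<le> DIM('a)" "connected V" "bounded (- V)" "q \<notin> closure V"
  obtains F where "connected F" "F \<noteq> {}" "F \<subseteq> frontier V"
    "\<And>K. bounded K \<Longrightarrow> convex K \<Longrightarrow> F \<subseteq> K \<Longrightarrow> q \<in> K"
proof
  define C where "C = connected_component_set (- V) q"
  have "q \<in> - V"
    using assms(4) closure_subset by blast
  then have "C \<in> components (- V)" "q \<in> C"
    by (simp_all add: C_def componentsI)
  have "bounded C"
    unfolding C_def by (rule bounded_subset[OF assms(3) connected_component_subset])
  show "connected (frontier C)"
    by (rule connected_frontier_component_complement[OF assms(2) \<open>C \<in> components (- V)\<close>])
  show "frontier C \<noteq> {}"
    using frontier_not_empty[of C] \<open>q \<in> C\<close> \<open>bounded C\<close> not_bounded_UNIV by blast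
  show "frontier C \<subseteq> frontier V"
    using frontier_of_connected_component_subset[of "- V" q] unfolding C_def by simp
  show "q \<in> K" if "bounded K" "convex K" "frontier C \<subseteq> K" for K
    using subset_convex_if_frontier_subset[OF assms(1) \<open>bounded C\<close> that] \<open>q \<in> C\<close> by blast
qed

lemma cball_disjoint_if_spheres_separated:
  fixes c c' :: "'a::euclidean_space"
  assumes "r' \<ge> 0" "sphere c r \<inter> cball c' r' = {}" "sphere c' r' \<inter> ball c r = {}"
  shows "cball c r \<inter> cball c' r' = {}"
proof (rule ccontr)
  assume "cball c r \<inter> cball c' r' \<noteq> {}"
  moreover have "cball c' r' \<inter> frontier (cball c r) = {}"
    using assms(2) by auto
  ultimately have "cball c' r' \<subseteq> cball c r"
    using connected_Int_frontier[OF convex_connected[OF convex_cball], of c' r' "cball c r"]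
    by blast
  have "x \<in> sphere c r" if "x \<in> sphere c' r'" for x
  proof -
    have "dist c x \<le> r"
      using that \<open>cball c' r' \<subseteq> cball c r\<close> by auto
    moreover have "\<not> dist c x < r"
      using that assms(3) by auto
    ultimately show ?thesis
      by simp
  qed
  then have "sphere c' r' \<subseteq> sphere c r"
    by blast
  moreover have "sphere c' r' \<noteq> {}"
    using assms(1) by simp
  ultimately show False
    using assms(2) sphere_cball[of c' r'] by blast
qed

lemma sphere_eq_sphereD:
  fixes c c' :: "'a::euclidean_space"
  assumes "r > 0" "r' > 0" "sphere c r = sphere c' r'"
  shows "c = c' \<and> r = r'"
proof -
  have "cball c r = cball c' r'"
    using Krein_Milman_frontier[OF convex_cball compact_cball, of c r]
      Krein_Milman_frontier[OF convex_cball compact_cball, of c' r'] assms(3) by simp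
  then show ?thesis
    using assms(1,2) by (simp add: cball_eq_cball_iff)
qed

section \<open>The Riemann sphere\<close>

lemma topspace_sphtop [simp]: "topspace sphtop = UNIV"
  by (simp add: sphtop_def topspace_pullback_topology)

lemma dist_stereo_infinity:
  "dist (stereo (Some z)) (stereo None) = 2 / sqrt (1 + (cmod z)\<^sup>2)"
proof -
  define m where "m = (cmod z)\<^sup>2"
  have pos: "1 + m > 0"
    by (simp add: m_def add_pos_nonneg)
  have "(dist (stereo (Some z)) (stereo None))\<^sup>2
      = (2 * Re z / (1 + m))\<^sup>2 + (2 * Im z / (1 + m))\<^sup>2 + (1 - (m - 1) / (m + 1))\<^sup>2"
    by (simp add: stereo_def dist_Pair_Pair dist_real_def m_def power2_abs abs_minus_commute
        power_divide)
  also have "1 - (m - 1) / (m + 1) = 2 / (1 + m)"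
    using pos by (simp add: field_simps)
  also have "(2 * Re z / (1 + m))\<^sup>2 + (2 * Im z / (1 + m))\<^sup>2 + (2 / (1 + m))\<^sup>2
      = 4 * (1 + m) / (1 + m)\<^sup>2"
    by (simp add: m_def cmod_power2 power_divide power_mult_distrib
        add_divide_distrib[symmetric] algebra_simps)
  also have "\<dots> = 4 / (1 + m)"
    using pos by (metis nonzero_mult_divide_mult_cancel_right power2_eq_square less_irrefl)
  also have "\<dots> = (2 / sqrt (1 + m))\<^sup>2"
    using pos by (simp add: power_divide)
  finally show ?thesis
    by (simp add: m_def power2_eq_iff_nonneg)
qed

lemma continuous_on_stereo_Some: "continuous_on UNIV (\<lambda>z. stereo (Some z))"
proof -
  have "1 + (cmod z)\<^sup>2 \<noteq> 0" "(cmod z)\<^sup>2 + 1 \<noteq> 0" for z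
    by (simp_all add: add_nonneg_eq_0_iff)
  then show ?thesis
    unfolding stereo_def by (auto intro!: continuous_intros)
qed

lemma tendsto_stereo_at_infinity: "((\<lambda>z. stereo (Some z)) \<longlongrightarrow> stereo None) at_infinity"
proof -
  have "\<forall>\<^sub>F z in at_infinity. cmod z \<le> sqrt (1 + (cmod z)\<^sup>2)"
    by (intro always_eventually allI real_le_rsqrt) simp
  then have "filterlim (\<lambda>z. sqrt (1 + (cmod z)\<^sup>2)) at_top at_infinity"
    by (rule filterlim_at_top_mono[OF filterlim_norm_at_top])
  then have "((\<lambda>z. 2 / sqrt (1 + (cmod z)\<^sup>2)) \<longlongrightarrow> 0) at_infinity"
    using tendsto_divide_0[OF tendsto_const] filterlim_at_top_imp_at_infinity by blast
  then show ?thesis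
    by (simp only: tendsto_dist_iff[THEN iffD2] dist_stereo_infinity)
qed

lemma stereo_Some_inverse:
  "snd (snd (stereo (Some z))) < 1"
  "Complex (fst (stereo (Some z))) (fst (snd (stereo (Some z))))
     / complex_of_real (1 - snd (snd (stereo (Some z)))) = z"
proof -
  define m where "m = (cmod z)\<^sup>2"
  have pos: "1 + m > 0"
    by (simp add: m_def add_pos_nonneg)
  then show "snd (snd (stereo (Some z))) < 1"
    by (simp add: stereo_def m_def[symmetric])
  have "1 - (m - 1) / (m + 1) = 2 / (1 + m)"
    using pos by (simp add: field_simps)
  moreover have "Complex (2 * Re z / (1 + m)) (2 * Im z / (1 + m))
      = complex_of_real (2 / (1 + m)) * z"
    by (simp add: complex_eq_iff)
  moreover have "1 + complex_of_real m \<noteq> 0"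
    using pos by (metis of_real_1 of_real_add of_real_eq_0_iff less_irrefl)
  ultimately show "Complex (fst (stereo (Some z))) (fst (snd (stereo (Some z))))
     / complex_of_real (1 - snd (snd (stereo (Some z)))) = z"
    using pos by (simp add: stereo_def m_def[symmetric])
qed

lemma openin_sphtop_image_Some:
  assumes "open W"
  shows "openin sphtop (Some ` W)"
proof -
  define g where "g p = Complex (fst p) (fst (snd p)) / complex_of_real (1 - snd (snd p))"
    for p :: "real \<times> real \<times> real"
  define S where "S = {p :: real \<times> real \<times> real. snd (snd p) < 1}"
  have "open S"
    unfolding S_def by (intro open_Collect_less continuous_intros)
  moreover have "continuous_on S g"
    unfolding g_def S_def by (intro continuous_intros) (auto simp: Complex_eq)
  ultimately have "open (S \<inter> g -` W)"
    using assms continuous_open_preimage by blast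
  moreover have "Some ` W = stereo -` (S \<inter> g -` W)"
  proof -
    have "stereo None \<notin> S"
      by (simp add: S_def stereo_def)
    moreover have "stereo (Some z) \<in> S \<inter> g -` W \<longleftrightarrow> z \<in> W" for z
      using stereo_Some_inverse[of z] by (simp add: S_def g_def)
    ultimately have "p \<in> Some ` W \<longleftrightarrow> p \<in> stereo -` (S \<inter> g -` W)" for p
      by (cases p) auto
    then show ?thesis
      by blast
  qed
  ultimately show ?thesis
    unfolding sphtop_def openin_pullback_topology by auto
qed

lemma openin_sphtop_exterior_cball:
  assumes "R \<ge> 0"
  shows "openin sphtop (insert None (Some ` (- cball 0 R)))"
proof -
  have "2 / sqrt (1 + (cmod z)\<^sup>2) < 2 / sqrt (1 + R\<^sup>2) \<longleftrightarrow> R < cmod z" for z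
  proof -
    have "0 < sqrt (1 + (cmod z)\<^sup>2)" "0 < sqrt (1 + R\<^sup>2)"
      by (simp_all add: add_pos_nonneg)
    then have "2 / sqrt (1 + (cmod z)\<^sup>2) < 2 / sqrt (1 + R\<^sup>2) \<longleftrightarrow> R\<^sup>2 < (cmod z)\<^sup>2"
      by (simp add: divide_less_eq less_divide_eq)
    also have "\<dots> \<longleftrightarrow> R < cmod z"
      using assms abs_le_square_iff[of "cmod z" R] by (simp add: not_le[symmetric])
    finally show ?thesis .
  qed
  then have "p \<in> stereo -` ball (stereo None) (2 / sqrt (1 + R\<^sup>2))
      \<longleftrightarrow> p \<in> insert None (Some ` (- cball 0 R))" for p
    using dist_stereo_infinity by (cases p) (auto simp: dist_commute add_pos_nonneg)
  then have "insert None (Some ` (- cball 0 R))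
      = stereo -` ball (stereo None) (2 / sqrt (1 + R\<^sup>2))"
    by blast
  then show ?thesis
    unfolding sphtop_def openin_pullback_topology by auto
qed

lemma openin_sphtop:
  "openin sphtop U \<longleftrightarrow>
     open {z. Some z \<in> U} \<and> (None \<in> U \<longrightarrow> (\<forall>\<^sub>F z in at_infinity. Some z \<in> U))"
proof
  assume "openin sphtop U"
  then obtain V where V: "open V" "U = stereo -` V"
    by (auto simp: sphtop_def openin_pullback_topology)
  have "open ((\<lambda>z. stereo (Some z)) -` V)"
    using open_vimage[OF V(1) continuous_on_stereo_Some] .
  moreover have "\<forall>\<^sub>F z in at_infinity. Some z \<in> U" if "None \<in> U"
    using topological_tendstoD[OF tendsto_stereo_at_infinity V(1)] that V(2) by auto
  ultimately show "open {z. Some z \<in> U} \<and> (None \<in> U \<longrightarrow> (\<forall>\<^sub>F z in at_infinity. Some z \<in> U))"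
    using V(2) by (simp add: vimage_def)
next
  assume U: "open {z. Some z \<in> U} \<and> (None \<in> U \<longrightarrow> (\<forall>\<^sub>F z in at_infinity. Some z \<in> U))"
  define P where "P = Some ` {z. Some z \<in> U}"
  have "openin sphtop P"
    unfolding P_def using U openin_sphtop_image_Some by blast
  have P: "P \<subseteq> U" "U - {None} \<subseteq> P"
    unfolding P_def by (auto simp: image_iff) (metis not_None_eq)
  show "openin sphtop U"
  proof (cases "None \<in> U")
    case True
    obtain b where b: "\<forall>z. b \<le> cmod z \<longrightarrow> Some z \<in> U"
      using U True unfolding eventually_at_infinity by blast
    define R where "R = max b 0"
    have R: "R \<ge> 0" "\<And>z. R < cmod z \<Longrightarrow> Some z \<in> U"
      using b by (auto simp: R_def)
    have "U = P \<union> insert None (Some ` (- cball 0 R))"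
      using P R(2) True by auto
    then show ?thesis
      using \<open>openin sphtop P\<close> openin_sphtop_exterior_cball[OF R(1)] by (metis openin_Un)
  next
    case False
    then have "U = P"
      using P by blast
    then show ?thesis
      using \<open>openin sphtop P\<close> by simp
  qed
qed

lemma openin_sphtop_insert_None:
  assumes "open W" "bounded (- W)"
  shows "openin sphtop (insert None (Some ` W))"
proof -
  have "\<forall>\<^sub>F z in at_infinity. z \<in> W"
    using assms(2) bounded_Compl_iff_eventually_at_infinity by blast
  then show ?thesis
    using assms(1) by (simp add: openin_sphtop inj_image_mem_iff)
qed

lemma continuous_map_Some: "continuous_map euclidean sphtop Some"
  by (simp add: continuous_map_def openin_sphtop vimage_def)

lemma Some_in_interior_of_sphtop_iff:
  "Some z \<in> sphtop interior_of A \<longleftrightarrow> z \<in> interior {w. Some w \<in> A}"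
proof
  assume "Some z \<in> sphtop interior_of A"
  then obtain T where T: "openin sphtop T" "Some z \<in> T" "T \<subseteq> A"
    by (auto simp: interior_of_def)
  then have "{w. Some w \<in> T} \<subseteq> interior {w. Some w \<in> A}"
    by (intro interior_maximal) (auto simp: openin_sphtop)
  then show "z \<in> interior {w. Some w \<in> A}"
    using T(2) by auto
next
  assume z: "z \<in> interior {w. Some w \<in> A}"
  have "Some ` interior {w. Some w \<in> A} \<subseteq> sphtop interior_of A"
    by (intro interior_of_maximal openin_sphtop_image_Some open_interior)
      (auto dest: interior_subset[THEN subsetD])
  then show "Some z \<in> sphtop interior_of A"
    using z by auto
qed

lemma Some_in_closure_of_sphtop_iff:
  "Some z \<in> sphtop closure_of A \<longleftrightarrow> z \<in> closure {w. Some w \<in> A}"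
  using Some_in_interior_of_sphtop_iff[of z "- A"]
  by (simp add: closure_of_interior_of closure_interior Compl_eq_Diff_UNIV[symmetric]
      Collect_neg_eq)

lemma Some_in_frontier_of_sphtop_iff:
  "Some z \<in> sphtop frontier_of A \<longleftrightarrow> z \<in> frontier {w. Some w \<in> A}"
  by (simp add: frontier_of_def frontier_def Some_in_closure_of_sphtop_iff
      Some_in_interior_of_sphtop_iff)

lemma vimage_Some_bounded_clopen_empty:
  assumes "openin sphtop U" "connectedin sphtop U" "None \<in> U"
    and "open A" "open B" "{z. Some z \<in> U} \<subseteq> A \<union> B" "A \<inter> B \<inter> {z. Some z \<in> U} = {}"
    and "bounded (B \<inter> {z. Some z \<in> U})"
  shows "B \<inter> {z. Some z \<in> U} = {}"
proof -
  define V where "V = {z. Some z \<in> U}"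
  define E1 where "E1 = insert None (Some ` (A \<inter> V))"
  define E2 where "E2 = Some ` (B \<inter> V)"
  have "open V" "bounded (- V)"
    using assms(1,3) by (auto simp: V_def openin_sphtop bounded_Compl_iff_eventually_at_infinity)
  moreover have "- (A \<inter> V) \<subseteq> - V \<union> (B \<inter> V)"
    using assms(6) by (auto simp: V_def)
  ultimately have "bounded (- (A \<inter> V))"
    using assms(8) bounded_subset unfolding V_def by (metis bounded_Un)
  then have "openin sphtop E1"
    unfolding E1_def using assms(4) \<open>open V\<close> by (intro openin_sphtop_insert_None open_Int)
  moreover have "openin sphtop E2"
    unfolding E2_def using assms(5) \<open>open V\<close> by (simp add: openin_sphtop_image_Some open_Int)
  moreover have "U \<subseteq> E1 \<union> E2"
  proof
    fix p
    assume "p \<in> U"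
    then show "p \<in> E1 \<union> E2"
      using assms(6) by (cases p) (auto simp: E1_def E2_def V_def)
  qed
  moreover have "E1 \<inter> E2 \<inter> U = {}" "E1 \<inter> U \<noteq> {}"
    using assms(3,7) by (auto simp: E1_def E2_def V_def)
  ultimately have "E2 \<inter> U = {}"
    using assms(2) unfolding connectedin by blast
  then show ?thesis
    by (auto simp: E2_def V_def)
qed

lemma connected_vimage_Some:
  assumes "openin sphtop U" "connectedin sphtop U" "None \<in> U"
  shows "connected {z. Some z \<in> U}"
proof (rule connectedI)
  define V where "V = {z. Some z \<in> U}"
  fix A B
  assume A: "open A" "open B" "A \<inter> {z. Some z \<in> U} \<noteq> {}" "B \<inter> {z. Some z \<in> U} \<noteq> {}"
    "A \<inter> B \<inter> {z. Some z \<in> U} = {}" "{z. Some z \<in> U} \<subseteq> A \<union> B"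
  have "bounded (- V)"
    using assms(1,3) by (auto simp: V_def openin_sphtop bounded_Compl_iff_eventually_at_infinity)
  then obtain R where "\<forall>z \<in> - V. norm z \<le> R"
    unfolding bounded_iff by blast
  then have R: "- cball 0 R \<subseteq> V"
    by (force simp: not_le)
  have "connected (- cball (0::complex) R)"
    by (rule connected_complement_bounded_convex) auto
  then have "A \<inter> - cball 0 R = {} \<or> B \<inter> - cball 0 R = {}"
    using connectedD[OF _ A(1,2)] A(5,6) R unfolding V_def by blast
  then have "A \<inter> V \<subseteq> cball 0 R \<or> B \<inter> V \<subseteq> cball 0 R"
    by blast
  then have "bounded (A \<inter> V) \<or> bounded (B \<inter> V)"
    using bounded_cball bounded_subset by blast
  moreover have "{z. Some z \<in> U} \<subseteq> B \<union> A" "B \<inter> A \<inter> {z. Some z \<in> U} = {}"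
    using A(5,6) by blast+
  ultimately show False
    using vimage_Some_bounded_clopen_empty[OF assms A(1,2,6,5)]
      vimage_Some_bounded_clopen_empty[OF assms A(2,1)] A(3,4)
    unfolding V_def by blast
qed

section \<open>Disks and reflections in circles\<close>

definition cdisk :: "complex \<times> real \<Rightarrow> riemann set" where
  "cdisk i = Some ` cball (fst i) (snd i)"

lemma openin_disk: "openin sphtop (disk i)"
  unfolding disk_def by (simp add: openin_sphtop_image_Some)

lemma closedin_cdisk: "closedin sphtop (cdisk i)"
proof -
  have "p \<in> - cdisk i \<longleftrightarrow> p \<in> insert None (Some ` (- cball (fst i) (snd i)))" for p
    by (cases p) (auto simp: cdisk_def)
  moreover have "openin sphtop (insert None (Some ` (- cball (fst i) (snd i))))"
    by (rule openin_sphtop_insert_None) auto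
  ultimately have "openin sphtop (- cdisk i)"
    by (metis subsetI subset_antisym)
  then show ?thesis
    by (simp add: closedin_def Compl_eq_Diff_UNIV)
qed

lemma disk_subset_cdisk: "disk i \<subseteq> cdisk i"
  by (auto simp: disk_def cdisk_def)

lemma cdisk_eq_disk_Un_circle: "cdisk i = disk i \<union> Some ` sphere (fst i) (snd i)"
proof -
  have "cball (fst i) (snd i) = ball (fst i) (snd i) \<union> sphere (fst i) (snd i)"
    by (auto simp: less_le)
  then show ?thesis
    by (simp add: disk_def cdisk_def image_Un)
qed

lemma refl_Some_eq:
  "refl (c, r) (Some z) = (if z = c then None else Some (c + complex_of_real (r\<^sup>2) / cnj (z - c)))"
  by (simp add: refl_def)

lemma refl_None_eq: "refl (c, r) None = Some c"
  by (simp add: refl_def)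

lemma filterlim_circle_inversion_at_center:
  assumes "r \<noteq> 0"
  shows "filterlim (\<lambda>w. c + complex_of_real (r\<^sup>2) / cnj (w - c)) at_infinity (at c)"
proof -
  have r2: "complex_of_real (r\<^sup>2) \<noteq> 0"
    using assms by simp
  have "filterlim (\<lambda>w. cnj (w - c)) (at 0) (at c)"
    by (rule filterlim_atI) (auto intro!: tendsto_eq_intros simp: eventually_at_filter)
  then show ?thesis
    by (intro tendsto_add_filterlim_at_infinity[OF tendsto_const]
        filterlim_divide_at_infinity[OF tendsto_const _ r2])
qed

lemma tendsto_circle_inversion_at_infinity:
  "((\<lambda>w. c + complex_of_real (r\<^sup>2) / cnj (w - c)) \<longlongrightarrow> c) at_infinity"
proof -
  have "filterlim (\<lambda>w. w - c) at_infinity at_infinity"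
    using tendsto_add_filterlim_at_infinity'[OF filterlim_ident tendsto_const[of "- c"]] by simp
  then have "filterlim (\<lambda>w. cnj (w - c)) at_infinity at_infinity"
    by (simp add: filterlim_at_infinity_conv_norm_at_top flip: complex_cnj_diff)
  then show ?thesis
    using tendsto_add[OF tendsto_const tendsto_divide_0[OF tendsto_const]] by fastforce
qed

lemma eventually_nhds_refl_Some:
  assumes "r \<noteq> 0" "openin sphtop U" "refl (c, r) (Some z) \<in> U"
  shows "\<forall>\<^sub>F w in nhds z. refl (c, r) (Some w) \<in> U"
proof -
  define h where "h w = c + complex_of_real (r\<^sup>2) / cnj (w - c)" for w
  have refl_Some: "refl (c, r) (Some w) = (if w = c then None else Some (h w))" for w
    by (simp add: refl_Some_eq h_def)
  have W: "open {z. Some z \<in> U}" and infty: "None \<in> U \<Longrightarrow> \<forall>\<^sub>F z in at_infinity. Some z \<in> U"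
    using assms(2) by (auto simp: openin_sphtop)
  show ?thesis
  proof (cases "z = c")
    case True
    have h_at_c: "filterlim h at_infinity (at c)"
      unfolding h_def using assms(1) by (rule filterlim_circle_inversion_at_center)
    have "None \<in> U"
      using assms(3) True by (simp add: refl_Some)
    then have "\<forall>\<^sub>F w in at c. Some (h w) \<in> U"
      using filterlim_iff[THEN iffD1, OF h_at_c, rule_format, of "\<lambda>w. Some w \<in> U"] infty
      by simp
    then have "\<forall>\<^sub>F w in at c. refl (c, r) (Some w) \<in> U"
      using eventually_neq_at_within[of c c UNIV]
      by eventually_elim (simp add: refl_Some)
    then show ?thesis
      using True assms(3) by (simp add: eventually_nhds_conv_at)
  next
    case False
    then have "isCont h z"
      unfolding h_def by (auto intro!: continuous_intros)
    moreover have hz: "Some (h z) \<in> U"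
      using assms(3) False by (simp add: refl_Some)
    ultimately have "\<forall>\<^sub>F w in at z. Some (h w) \<in> U"
      using filterlim_iff[THEN iffD1, of h "nhds (h z)" "at z", rule_format,
          of "\<lambda>w. Some w \<in> U"] eventually_nhds_in_open[OF W, of "h z"]
      by (simp add: isCont_def)
    then have "\<forall>\<^sub>F w in nhds z. Some (h w) \<in> U"
      using hz by (simp add: eventually_nhds_conv_at)
    then show ?thesis
      using t1_space_nhds[OF False]
      by eventually_elim (simp add: refl_Some)
  qed
qed

lemma eventually_at_infinity_refl_Some:
  assumes "openin sphtop U" "refl (c, r) None \<in> U"
  shows "\<forall>\<^sub>F w in at_infinity. refl (c, r) (Some w) \<in> U"
proof -
  have "\<forall>\<^sub>F w in nhds c. Some w \<in> U"
    using assms eventually_nhds_in_open[of "{z. Some z \<in> U}" c]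
    by (simp add: refl_None_eq openin_sphtop)
  then have "\<forall>\<^sub>F w in at_infinity. Some (c + complex_of_real (r\<^sup>2) / cnj (w - c)) \<in> U"
    using filterlim_iff[THEN iffD1, OF tendsto_circle_inversion_at_infinity, rule_format,
        of "\<lambda>w. Some w \<in> U"] by simp
  moreover have "\<forall>\<^sub>F w in at_infinity. w \<noteq> c"
    using bounded_Compl_iff_eventually_at_infinity[of "- {c}"] by simp
  ultimately show ?thesis
    by eventually_elim (simp add: refl_Some_eq)
qed

lemma continuous_map_refl:
  assumes "snd i \<noteq> 0"
  shows "continuous_map sphtop sphtop (refl i)"
proof -
  obtain c r where i: "i = (c, r)" and r: "r \<noteq> 0"
    using assms by (cases i) auto
  have "openin sphtop (refl i -` U)" if U: "openin sphtop U" for U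
  proof -
    have "open {z. Some z \<in> refl i -` U}"
      using eventually_nhds_refl_Some[OF r U] by (subst open_iff_eventually_nhds) (simp add: i)
    moreover have "\<forall>\<^sub>F w in at_infinity. Some w \<in> refl i -` U" if "None \<in> refl i -` U"
      using eventually_at_infinity_refl_Some[OF U] that by (simp add: i)
    ultimately show ?thesis
      by (simp add: openin_sphtop)
  qed
  then show ?thesis
    by (simp add: continuous_map_def vimage_def)
qed

lemma refl_involution:
  assumes "snd i \<noteq> 0"
  shows "refl i (refl i p) = p"
proof -
  obtain c r where i: "i = (c, r)"
    by fastforce
  have "complex_of_real (r\<^sup>2) / cnj (complex_of_real (r\<^sup>2) / cnj (z - c)) = z - c"
    if "z \<noteq> c" for z
    using that assms i by (simp add: field_simps)
  then show ?thesis
    using assms i by (cases p) (auto simp: refl_Some_eq refl_None_eq)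
qed

lemma homeomorphic_map_refl:
  assumes "snd i \<noteq> 0"
  shows "homeomorphic_map sphtop sphtop (refl i)"
proof -
  have "homeomorphic_maps sphtop sphtop (refl i) (refl i)"
    unfolding homeomorphic_maps_def
    using continuous_map_refl[OF assms] refl_involution[OF assms] by simp
  then show ?thesis
    by (auto simp: homeomorphic_map_maps)
qed

lemma refl_mem_disk_iff:
  assumes "snd i > 0"
  shows "p \<in> disk i \<longleftrightarrow> refl i p \<notin> cdisk i"
proof -
  obtain c r where i: "i = (c, r)" and r: "r > 0"
    using assms by (cases i) auto
  show ?thesis
  proof (cases p)
    case None
    then show ?thesis
      using r by (simp add: i refl_None_eq disk_def cdisk_def)
  next
    case (Some z)
    show ?thesis
    proof (cases "z = c")
      case True
      then show ?thesis
        using Some r by (simp add: i refl_Some_eq disk_def cdisk_def)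
    next
      case False
      then have d: "dist c z > 0"
        by simp
      have "dist c (c + complex_of_real (r\<^sup>2) / cnj (z - c)) = r\<^sup>2 / dist c z"
        by (simp add: dist_norm norm_divide norm_power norm_minus_commute del: complex_cnj_diff)
      moreover have "r\<^sup>2 / dist c z \<le> r \<longleftrightarrow> r \<le> dist c z"
        using d r by (simp add: divide_le_eq power2_eq_square)
      ultimately show ?thesis
        using Some False by (simp add: i refl_Some_eq disk_def cdisk_def image_iff not_le)
    qed
  qed
qed

lemma refl_image_subset_disk:
  assumes "snd i > 0" and "S \<inter> cdisk i = {}"
  shows "refl i ` S \<subseteq> disk i"
proof
  fix p
  assume "p \<in> refl i ` S"
  then obtain q where "q \<in> S" "p = refl i q"
    by blast
  then show "p \<in> disk i"
    using assms refl_involution[of i] by (simp add: refl_mem_disk_iff disjoint_iff)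
qed

section \<open>Reduced words and ping-pong\<close>

lemma word_map_Nil [simp]: "word_map [] = id"
  by (simp add: word_map_def)

lemma word_map_Cons [simp]: "word_map (i # ws) = refl i \<circ> word_map ws"
  by (simp add: word_map_def)

lemma word_map_append: "word_map (us @ ws) = word_map us \<circ> word_map ws"
  by (induction us) auto

lemma reduced_word_Nil [simp]: "reduced_word J []"
  by (simp add: reduced_word_def)

lemma reduced_word_Cons:
  "reduced_word J (i # ws) \<longleftrightarrow> i \<in> J \<and> reduced_word J ws \<and> (ws \<noteq> [] \<longrightarrow> i \<noteq> hd ws)"
  by (auto simp: reduced_word_def successively_Cons)

lemma reduced_word_append:
  "reduced_word J (us @ ws) \<longleftrightarrow>
     reduced_word J us \<and> reduced_word J ws \<and> (us \<noteq> [] \<longrightarrow> ws \<noteq> [] \<longrightarrow> last us \<noteq> hd ws)"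
  by (auto simp: reduced_word_def successively_append_iff)

lemma reduced_word_hd_last:
  assumes "reduced_word J ws" "ws \<noteq> []"
  shows "hd ws \<in> J" "last ws \<in> J"
  using assms by (auto simp: reduced_word_def)

lemma reduced_words_common_prefix:
  assumes "reduced_word J (ws @ vs)" "reduced_word J (ws' @ vs')"
  obtains p us us' where "ws = p @ us" "ws' = p @ us'" "set p \<subseteq> J"
    "reduced_word J (us @ vs)" "reduced_word J (us' @ vs')"
    "us = [] \<or> us' = [] \<or> hd us \<noteq> hd us'"
proof -
  obtain p us us' where ws: "ws = p @ us" "ws' = p @ us'"
    and split: "us = [] \<or> us' = [] \<or> hd us \<noteq> hd us'"
    using longest_common_prefix by blast
  have "reduced_word J p" "reduced_word J (us @ vs)" "reduced_word J (us' @ vs')"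
    using assms unfolding ws append_assoc reduced_word_append[of J p] by simp_all
  moreover have "set p \<subseteq> J"
    using \<open>reduced_word J p\<close> by (simp add: reduced_word_def)
  ultimately show thesis
    using that ws split by blast
qed

locale disjoint_disks =
  fixes J :: "(complex \<times> real) set"
  assumes radius_pos: "i \<in> J \<Longrightarrow> snd i > 0"
    and cdisk_disjoint: "i \<in> J \<Longrightarrow> j \<in> J \<Longrightarrow> i \<noteq> j \<Longrightarrow> cdisk i \<inter> cdisk j = {}"
begin

lemma radius_nonzero: "i \<in> J \<Longrightarrow> snd i \<noteq> 0"
  using radius_pos by fastforce

lemma disk_disjoint: "i \<in> J \<Longrightarrow> j \<in> J \<Longrightarrow> i \<noteq> j \<Longrightarrow> disk i \<inter> disk j = {}"
  using cdisk_disjoint[of i j] disk_subset_cdisk[of i] disk_subset_cdisk[of j] by auto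

lemma homeomorphic_map_word_map:
  "set ws \<subseteq> J \<Longrightarrow> homeomorphic_map sphtop sphtop (word_map ws)"
proof (induction ws)
  case Nil
  show ?case
    by (simp only: word_map_Nil homeomorphic_map_id)
next
  case (Cons i ws)
  then have "homeomorphic_map sphtop sphtop (refl i \<circ> word_map ws)"
    using homeomorphic_map_compose[OF Cons.IH homeomorphic_map_refl[OF radius_nonzero]] by simp
  then show ?case
    by (simp only: word_map_Cons)
qed

lemma inj_word_map: "set ws \<subseteq> J \<Longrightarrow> inj (word_map ws)"
  using homeomorphic_imp_injective_map[OF homeomorphic_map_word_map] by simp

lemma openin_word_map_image_iff:
  "set ws \<subseteq> J \<Longrightarrow> openin sphtop (word_map ws ` S) \<longleftrightarrow> openin sphtop S"
  using homeomorphic_map_openness[OF homeomorphic_map_word_map] by simp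

lemma closure_of_word_map_image:
  "set ws \<subseteq> J \<Longrightarrow> sphtop closure_of (word_map ws ` S) = word_map ws ` (sphtop closure_of S)"
  using homeomorphic_map_closure_of[OF homeomorphic_map_word_map] by simp

lemma word_map_append_images_disjoint_iff:
  assumes "set p \<subseteq> J"
  shows "word_map (p @ us) ` X \<inter> word_map (p @ ws) ` Y = {}
    \<longleftrightarrow> word_map us ` X \<inter> word_map ws ` Y = {}"
proof -
  have "word_map (p @ us) ` X \<inter> word_map (p @ ws) ` Y
      = word_map p ` (word_map us ` X \<inter> word_map ws ` Y)"
    by (simp only: word_map_append image_comp[symmetric] image_Int[OF inj_word_map[OF assms]])
  then show ?thesis
    by simp
qed

lemma word_map_image_subset_disk:
  assumes "reduced_word J ws" "ws \<noteq> []" "S \<inter> cdisk (last ws) = {}"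
  shows "word_map ws ` S \<subseteq> disk (hd ws)"
  using assms
proof (induction ws)
  case Nil
  then show ?case
    by simp
next
  case (Cons i ws)
  have i: "i \<in> J" "reduced_word J ws" "ws \<noteq> [] \<Longrightarrow> i \<noteq> hd ws"
    using Cons.prems(1) by (auto simp: reduced_word_Cons)
  show ?case
  proof (cases "ws = []")
    case True
    then show ?thesis
      using Cons.prems(3) refl_image_subset_disk[OF radius_pos[OF i(1)]] by simp
  next
    case False
    have "word_map ws ` S \<subseteq> disk (hd ws)"
      using Cons.IH[OF i(2) False] Cons.prems(3) False by simp
    then have "word_map ws ` S \<subseteq> cdisk (hd ws)"
      using disk_subset_cdisk by (rule subset_trans)
    then have "word_map ws ` S \<inter> cdisk i = {}"
      using cdisk_disjoint[OF i(1) reduced_word_hd_last(1)[OF i(2) False] i(3)[OF False]] by auto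
    then have "refl i ` word_map ws ` S \<subseteq> disk i"
      by (rule refl_image_subset_disk[OF radius_pos[OF i(1)]])
    then show ?thesis
      by (simp add: image_comp)
  qed
qed

lemma word_map_cdisk_subset_disk:
  assumes "reduced_word J (ws @ [i])" "ws \<noteq> []"
  shows "word_map ws ` cdisk i \<subseteq> disk (hd ws)"
proof -
  have "reduced_word J ws" "reduced_word J [i]" "last ws \<noteq> i"
    using assms by (simp_all add: reduced_word_append)
  then have ws: "reduced_word J ws" "i \<in> J" "last ws \<noteq> i"
    by (simp_all add: reduced_word_def)
  then have "cdisk i \<inter> cdisk (last ws) = {}"
    using cdisk_disjoint reduced_word_hd_last(2)[OF ws(1) assms(2)] by metis
  then show ?thesis
    using word_map_image_subset_disk[OF ws(1) assms(2)] by blast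
qed

lemma generation_disks_disjoint:
  assumes "reduced_word J (ws @ [i])" "reduced_word J (ws' @ [i'])"
    and "length ws = length ws'" "ws @ [i] \<noteq> ws' @ [i']"
  shows "word_map ws ` disk i \<inter> word_map ws' ` disk i' = {}"
proof -
  obtain p us us' where ws: "ws = p @ us" "ws' = p @ us'"
    and red: "set p \<subseteq> J" "reduced_word J (us @ [i])" "reduced_word J (us' @ [i'])"
    and split: "us = [] \<or> us' = [] \<or> hd us \<noteq> hd us'"
    using reduced_words_common_prefix[OF assms(1,2)] by blast
  have len: "length us = length us'"
    using assms(3) ws by simp
  have "word_map us ` disk i \<inter> word_map us' ` disk i' = {}"
  proof (cases "us = []")
    case True
    then have "us' = []" "i \<noteq> i'"
      using len assms(4) ws by auto
    moreover have "i \<in> J" "i' \<in> J"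
      using red(2,3) True \<open>us' = []\<close> by (simp_all add: reduced_word_def)
    ultimately show ?thesis
      using True disk_disjoint by simp
  next
    case False
    then have "us' \<noteq> []" "hd us \<noteq> hd us'"
      using len split by auto
    moreover have "word_map us ` disk i \<subseteq> disk (hd us)"
      using word_map_cdisk_subset_disk[OF red(2) False] disk_subset_cdisk by blast
    moreover have "word_map us' ` disk i' \<subseteq> disk (hd us')"
      using word_map_cdisk_subset_disk[OF red(3) \<open>us' \<noteq> []\<close>] disk_subset_cdisk by blast
    moreover have "hd us \<in> J" "hd us' \<in> J"
      using red(2,3) False \<open>us' \<noteq> []\<close> by (auto simp: reduced_word_append reduced_word_hd_last)
    ultimately show ?thesis
      using disk_disjoint[of "hd us" "hd us'"] by blast
  qed
  then show ?thesis
    using word_map_append_images_disjoint_iff[OF red(1)] ws by simp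
qed

end

section \<open>Tiles and generation disks\<close>

definition word_images_upto :: "(complex \<times> real) set \<Rightarrow> nat \<Rightarrow> riemann set \<Rightarrow> riemann set" where
  "word_images_upto J k S = \<Union>{word_map ws ` S | ws. reduced_word J ws \<and> length ws \<le> k}"

definition generation_disks :: "(complex \<times> real) set \<Rightarrow> nat \<Rightarrow> riemann set" where
  "generation_disks J k =
     \<Union>{word_map ws ` disk i | ws i. reduced_word J (ws @ [i]) \<and> length ws = k}"

lemma word_map_image_subset_word_images_upto:
  "reduced_word J ws \<Longrightarrow> length ws \<le> k \<Longrightarrow> word_map ws ` S \<subseteq> word_images_upto J k S"
  unfolding word_images_upto_def by blast

lemma word_map_disk_subset_generation_disks:
  "reduced_word J (ws @ [i]) \<Longrightarrow> word_map ws ` disk i \<subseteq> generation_disks J (length ws)"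
  unfolding generation_disks_def by blast

lemma word_images_upto_mono: "k \<le> m \<Longrightarrow> word_images_upto J k S \<subseteq> word_images_upto J m S"
  unfolding word_images_upto_def by (intro Union_mono) auto

lemma word_images_upto_0 [simp]: "word_images_upto J 0 S = S"
proof -
  have "{word_map ws ` S | ws. reduced_word J ws \<and> length ws \<le> 0} = {S}"
    by auto
  then show ?thesis
    by (simp add: word_images_upto_def)
qed

lemma generation_disks_0 [simp]: "generation_disks J 0 = \<Union>(disk ` J)"
proof -
  have "{word_map ws ` disk i | ws i. reduced_word J (ws @ [i]) \<and> length ws = 0} = disk ` J"
    by (auto simp: reduced_word_def)
  then show ?thesis
    by (simp add: generation_disks_def)
qed

locale schottky_domain = disjoint_disks J for J +
  fixes \<Omega> :: "riemann set"
  assumes open_domain: "openin sphtop \<Omega>"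
    and domain_disjoint_cdisk: "i \<in> J \<Longrightarrow> \<Omega> \<inter> cdisk i = {}"
    and closure_Un_disks: "sphtop closure_of \<Omega> \<union> \<Union>(disk ` J) = UNIV"
begin

lemma domain_disjoint_disk: "i \<in> J \<Longrightarrow> \<Omega> \<inter> disk i = {}"
  using domain_disjoint_cdisk disk_subset_cdisk by blast

lemma word_map_domain_subset_disk:
  assumes "reduced_word J ws" "ws \<noteq> []"
  shows "word_map ws ` \<Omega> \<subseteq> disk (hd ws)"
  using word_map_image_subset_disk[OF assms]
    domain_disjoint_cdisk[OF reduced_word_hd_last(2)[OF assms]] by blast

lemma word_map_domains_disjoint:
  assumes "reduced_word J ws" "reduced_word J ws'" "ws \<noteq> ws'"
  shows "word_map ws ` \<Omega> \<inter> word_map ws' ` \<Omega> = {}"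
proof -
  obtain p us us' where ws: "ws = p @ us" "ws' = p @ us'"
    and red: "set p \<subseteq> J" "reduced_word J us" "reduced_word J us'"
    and split: "us = [] \<or> us' = [] \<or> hd us \<noteq> hd us'"
    using reduced_words_common_prefix[of J ws "[]" ws' "[]"] assms(1,2) by auto
  have "us \<noteq> us'"
    using assms(3) ws by simp
  have domain_outside: "\<Omega> \<inter> word_map vs ` \<Omega> = {}" if "reduced_word J vs" "vs \<noteq> []" for vs
    using word_map_domain_subset_disk[OF that]
      domain_disjoint_disk[OF reduced_word_hd_last(1)[OF that]] by blast
  have "word_map us ` \<Omega> \<inter> word_map us' ` \<Omega> = {}"
  proof (cases "us = [] \<or> us' = []")
    case True
    then consider "us = []" "us' \<noteq> []" | "us' = []" "us \<noteq> []"
      using \<open>us \<noteq> us'\<close> by blast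
    then show ?thesis
    proof cases
      case 1
      then show ?thesis
        using domain_outside[OF red(3)] by simp
    next
      case 2
      then show ?thesis
        using domain_outside[OF red(2)] by (simp add: Int_commute)
    qed
  next
    case False
    then have "hd us \<noteq> hd us'"
      using split by simp
    then have "disk (hd us) \<inter> disk (hd us') = {}"
      using disk_disjoint reduced_word_hd_last(1) red(2,3) False by simp
    moreover have "word_map us ` \<Omega> \<subseteq> disk (hd us)" "word_map us' ` \<Omega> \<subseteq> disk (hd us')"
      using word_map_domain_subset_disk red(2,3) False by simp_all
    ultimately show ?thesis
      by blast
  qed
  then show ?thesis
    using word_map_append_images_disjoint_iff[OF red(1)] ws by simp
qed

lemma generation_disk_disjoint_domain:
  assumes "reduced_word J (ws @ [i])" "reduced_word J ws'" "length ws' \<le> length ws"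
  shows "word_map ws ` disk i \<inter> word_map ws' ` \<Omega> = {}"
proof -
  obtain p us us' where ws: "ws = p @ us" "ws' = p @ us'"
    and red: "set p \<subseteq> J" "reduced_word J (us @ [i])" "reduced_word J us'"
    and split: "us = [] \<or> us' = [] \<or> hd us \<noteq> hd us'"
    using reduced_words_common_prefix[of J ws "[i]" ws' "[]"] assms(1,2) by auto
  have len: "length us' \<le> length us"
    using assms(3) ws by simp
  have "word_map us ` disk i \<inter> word_map us' ` \<Omega> = {}"
  proof (cases "us = []")
    case True
    then have "us' = []" "i \<in> J"
      using len red(2) by (simp_all add: reduced_word_def)
    then show ?thesis
      using True domain_disjoint_disk[OF \<open>i \<in> J\<close>] by auto
  next
    case False
    have "hd us \<in> J"
      using red(2) False by (simp add: reduced_word_append reduced_word_hd_last)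
    have "word_map us ` disk i \<subseteq> disk (hd us)"
      using word_map_cdisk_subset_disk[OF red(2) False] disk_subset_cdisk by blast
    moreover have "disk (hd us) \<inter> word_map us' ` \<Omega> = {}"
    proof (cases "us' = []")
      case True
      then show ?thesis
        using domain_disjoint_disk[OF \<open>hd us \<in> J\<close>] by auto
    next
      case False
      then have "disk (hd us) \<inter> disk (hd us') = {}"
        using split \<open>us \<noteq> []\<close> \<open>hd us \<in> J\<close> disk_disjoint reduced_word_hd_last(1)[OF red(3)]
        by simp
      moreover have "word_map us' ` \<Omega> \<subseteq> disk (hd us')"
        using word_map_domain_subset_disk red(3) False by simp
      ultimately show ?thesis
        by blast
    qed
    ultimately show ?thesis
      by blast
  qed
  then show ?thesis
    using word_map_append_images_disjoint_iff[OF red(1)] ws by simp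
qed

lemma disk_subset_refl_images:
  assumes "i \<in> J"
  shows "disk i \<subseteq> refl i ` (sphtop closure_of \<Omega>) \<union> (\<Union>j \<in> J - {i}. refl i ` disk j)"
proof
  fix p
  assume p: "p \<in> disk i"
  define q where "q = refl i p"
  have p_eq: "p = refl i q"
    using refl_involution[OF radius_nonzero[OF assms]] q_def by simp
  have q_out: "q \<notin> cdisk i"
    using p refl_mem_disk_iff[OF radius_pos[OF assms]] q_def by simp
  show "p \<in> refl i ` (sphtop closure_of \<Omega>) \<union> (\<Union>j \<in> J - {i}. refl i ` disk j)"
  proof (cases "q \<in> sphtop closure_of \<Omega>")
    case True
    then show ?thesis
      using p_eq by blast
  next
    case False
    then obtain j where "j \<in> J" "q \<in> disk j"
      using closure_Un_disks by blast
    moreover have "j \<noteq> i"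
      using q_out \<open>q \<in> disk j\<close> disk_subset_cdisk[of j] by blast
    ultimately show ?thesis
      using p_eq by blast
  qed
qed

lemma generation_disks_subset_Suc:
  "generation_disks J k
     \<subseteq> word_images_upto J (Suc k) (sphtop closure_of \<Omega>) \<union> generation_disks J (Suc k)"
proof
  fix p
  assume "p \<in> generation_disks J k"
  then obtain ws i q where ws: "reduced_word J (ws @ [i])" "length ws = k"
    and q: "q \<in> disk i" "p = word_map ws q"
    unfolding generation_disks_def by blast
  have "i \<in> J"
    using ws(1) by (simp add: reduced_word_append reduced_word_def)
  then consider "q \<in> refl i ` (sphtop closure_of \<Omega>)"
    | j where "j \<in> J" "j \<noteq> i" "q \<in> refl i ` disk j"
    using disk_subset_refl_images q(1) by blast
  then show "p \<in> word_images_upto J (Suc k) (sphtop closure_of \<Omega>) \<union> generation_disks J (Suc k)"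
  proof cases
    case 1
    then have "p \<in> word_map (ws @ [i]) ` (sphtop closure_of \<Omega>)"
      using q(2) by (auto simp: word_map_append)
    then show ?thesis
      using word_map_image_subset_word_images_upto[OF ws(1)] ws(2) by auto
  next
    case (2 j)
    then have "p \<in> word_map (ws @ [i]) ` disk j"
      using q(2) by (auto simp: word_map_append)
    moreover have "reduced_word J ((ws @ [i]) @ [j])"
      unfolding reduced_word_append[of J "ws @ [i]"] using ws(1) 2 by (simp add: reduced_word_def)
    ultimately show ?thesis
      using word_map_disk_subset_generation_disks ws(2) by fastforce
  qed
qed

lemma word_images_Un_generation_disks:
  "word_images_upto J k (sphtop closure_of \<Omega>) \<union> generation_disks J k = UNIV"
proof (induction k)
  case 0
  show ?case
    using closure_Un_disks by (simp only: word_images_upto_0 generation_disks_0)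
next
  case (Suc k)
  have "word_images_upto J k (sphtop closure_of \<Omega>)
      \<subseteq> word_images_upto J (Suc k) (sphtop closure_of \<Omega>)"
    by (rule word_images_upto_mono) simp
  with Suc.IH generation_disks_subset_Suc[of k] show ?case
    by auto
qed

lemma openin_word_images_upto: "openin sphtop (word_images_upto J k \<Omega>)"
  unfolding word_images_upto_def
proof (rule openin_Union, clarify)
  fix ws
  assume "reduced_word J ws"
  then show "openin sphtop (word_map ws ` \<Omega>)"
    using open_domain openin_word_map_image_iff by (simp add: reduced_word_def)
qed

lemma openin_generation_disks: "openin sphtop (generation_disks J k)"
  unfolding generation_disks_def
proof (rule openin_Union, clarify)
  fix ws i
  assume "reduced_word J (ws @ [i])"
  then show "openin sphtop (word_map ws ` disk i)"
    using openin_disk openin_word_map_image_iff by (simp add: reduced_word_def)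
qed

lemma closure_of_word_images_disjoint_generation_disks:
  "sphtop closure_of (word_images_upto J k \<Omega>) \<inter> generation_disks J k = {}"
proof -
  have "generation_disks J k \<inter> word_images_upto J k \<Omega> = {}"
    unfolding generation_disks_def word_images_upto_def
    using generation_disk_disjoint_domain by fastforce
  then show ?thesis
    using openin_Int_closure_of_eq_empty[OF openin_generation_disks] by blast
qed

lemma word_images_closure_subset_closure_of:
  "word_images_upto J k (sphtop closure_of \<Omega>) \<subseteq> sphtop closure_of (word_images_upto J k \<Omega>)"
proof -
  have "word_map ws ` (sphtop closure_of \<Omega>) \<subseteq> sphtop closure_of (word_images_upto J k \<Omega>)"
    if "reduced_word J ws" "length ws \<le> k" for ws
  proof -
    have "word_map ws ` \<Omega> \<subseteq> word_images_upto J k \<Omega>"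
      using that unfolding word_images_upto_def by blast
    then have "sphtop closure_of (word_map ws ` \<Omega>) \<subseteq> sphtop closure_of (word_images_upto J k \<Omega>)"
      by (rule closure_of_mono)
    then show ?thesis
      using that(1) closure_of_word_map_image by (simp add: reduced_word_def)
  qed
  then show ?thesis
    unfolding word_images_upto_def[of J k "sphtop closure_of \<Omega>"] by blast
qed

lemma closure_of_word_images_upto:
  "sphtop closure_of (word_images_upto J k \<Omega>) = word_images_upto J k (sphtop closure_of \<Omega>)"
  using word_images_closure_subset_closure_of closure_of_word_images_disjoint_generation_disks
    word_images_Un_generation_disks by blast

lemma Compl_closure_of_word_images_upto:
  "UNIV - sphtop closure_of (word_images_upto J k \<Omega>) = generation_disks J k"
  using word_images_closure_subset_closure_of closure_of_word_images_disjoint_generation_disks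
    word_images_Un_generation_disks by blast

lemma word_map_closure_disjoint_domain:
  assumes "reduced_word J ws" "reduced_word J ws'" "ws \<noteq> ws'"
  shows "word_map ws ` (sphtop closure_of \<Omega>) \<inter> word_map ws' ` \<Omega> = {}"
proof -
  have J: "set ws \<subseteq> J" "set ws' \<subseteq> J"
    using assms by (simp_all add: reduced_word_def)
  then have "openin sphtop (word_map ws' ` \<Omega>)"
    using open_domain openin_word_map_image_iff by simp
  then have "word_map ws' ` \<Omega> \<inter> sphtop closure_of (word_map ws ` \<Omega>) = {}"
    using openin_Int_closure_of_eq_empty word_map_domains_disjoint[OF assms]
    by (metis inf_commute)
  then show ?thesis
    using closure_of_word_map_image[OF J(1)] by (simp add: inf_commute)
qed

lemma word_map_frontier_notin_word_images_upto:
  assumes "reduced_word J ws" "y \<in> sphtop closure_of \<Omega>" "y \<notin> \<Omega>"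
  shows "word_map ws y \<notin> word_images_upto J k \<Omega>"
proof
  assume "word_map ws y \<in> word_images_upto J k \<Omega>"
  then obtain ws' z where ws': "reduced_word J ws'" "z \<in> \<Omega>" "word_map ws y = word_map ws' z"
    unfolding word_images_upto_def by blast
  show False
  proof (cases "ws' = ws")
    case True
    then have "z = y"
      using inj_word_map[of ws] assms(1) ws'(3) by (simp add: reduced_word_def inj_eq)
    then show False
      using assms(3) ws'(2) by simp
  next
    case False
    then show False
      using word_map_closure_disjoint_domain[OF assms(1) ws'(1)] assms(2) ws' by blast
  qed
qed

lemma frontier_of_word_images_upto:
  "sphtop frontier_of (word_images_upto J k \<Omega>)
     = word_images_upto J k (sphtop frontier_of \<Omega>)"
proof -
  have "sphtop frontier_of (word_images_upto J k \<Omega>)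
      = word_images_upto J k (sphtop closure_of \<Omega>) - word_images_upto J k \<Omega>"
    using openin_word_images_upto
    by (simp add: frontier_of_def interior_of_openin closure_of_word_images_upto)
  also have "\<dots> = word_images_upto J k (sphtop closure_of \<Omega> - \<Omega>)"
  proof (intro equalityI subsetI)
    fix x
    assume x: "x \<in> word_images_upto J k (sphtop closure_of \<Omega>) - word_images_upto J k \<Omega>"
    then obtain ws y where ws: "reduced_word J ws" "length ws \<le> k"
      and y: "y \<in> sphtop closure_of \<Omega>" "x = word_map ws y"
      unfolding word_images_upto_def by blast
    have "y \<notin> \<Omega>"
      using x y(2) word_map_image_subset_word_images_upto[OF ws] by blast
    then show "x \<in> word_images_upto J k (sphtop closure_of \<Omega> - \<Omega>)"
      using y word_map_image_subset_word_images_upto[OF ws] by blast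
  next
    fix x
    assume "x \<in> word_images_upto J k (sphtop closure_of \<Omega> - \<Omega>)"
    then obtain ws y where ws: "reduced_word J ws" "length ws \<le> k"
      and y: "y \<in> sphtop closure_of \<Omega>" "y \<notin> \<Omega>" "x = word_map ws y"
      unfolding word_images_upto_def by blast
    then show "x \<in> word_images_upto J k (sphtop closure_of \<Omega>) - word_images_upto J k \<Omega>"
      using word_map_frontier_notin_word_images_upto[OF ws(1) y(1,2)]
        word_map_image_subset_word_images_upto[OF ws] by blast
  qed
  finally show ?thesis
    using open_domain by (simp add: frontier_of_def interior_of_openin)
qed

lemma closure_of_generation_disk_subset:
  assumes "reduced_word J (ws @ [i, j])"
  shows "sphtop closure_of (word_map (ws @ [i]) ` disk j) \<subseteq> word_map ws ` disk i"
proof -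
  have "reduced_word J (ws @ [i])" "reduced_word J ([i] @ [j])"
    using assms reduced_word_append[of J ws "[i, j]"] reduced_word_append[of J "ws @ [i]" "[j]"]
    by simp_all
  then have J: "set (ws @ [i]) \<subseteq> J" and ij: "reduced_word J ([i] @ [j])"
    by (simp_all add: reduced_word_def)
  have "sphtop closure_of (disk j) \<subseteq> cdisk j"
    by (rule closure_of_minimal[OF disk_subset_cdisk closedin_cdisk])
  then have "sphtop closure_of (word_map (ws @ [i]) ` disk j) \<subseteq> word_map (ws @ [i]) ` cdisk j"
    using closure_of_word_map_image[OF J] by auto
  also have "\<dots> = word_map ws ` word_map [i] ` cdisk j"
    by (simp add: word_map_append image_comp)
  also have "\<dots> \<subseteq> word_map ws ` disk i"
    using word_map_cdisk_subset_disk[OF ij] by (intro image_mono) simp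
  finally show ?thesis .
qed

end

section \<open>Circle domains\<close>

lemma circ_index_radius_pos: "i \<in> circ_index \<Omega> \<Longrightarrow> snd i > 0"
  by (auto simp: circ_index_def)

lemma boundary_component_subset_frontier_of:
  "K \<in> boundary_components \<Omega> \<Longrightarrow> K \<subseteq> sphtop frontier_of \<Omega>"
  unfolding boundary_components_def using connected_components_of_subset by fastforce

lemma circle_subset_frontier_of:
  assumes "i \<in> circ_index \<Omega>"
  shows "Some ` sphere (fst i) (snd i) \<subseteq> sphtop frontier_of \<Omega>"
proof -
  have "Some ` sphere (fst i) (snd i) \<in> boundary_components \<Omega>"
    using assms by (auto simp: circ_index_def)
  then show ?thesis
    by (rule boundary_component_subset_frontier_of)
qed

lemma connected_subset_boundary_component:
  assumes "connectedin sphtop S" "S \<subseteq> sphtop frontier_of \<Omega>" "S \<noteq> {}"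
  obtains K where "K \<in> boundary_components \<Omega>" "S \<subseteq> K"
proof -
  obtain p where "p \<in> S"
    using assms(3) by blast
  define K where "K = connected_component_of_set (subtopology sphtop (sphtop frontier_of \<Omega>)) p"
  have "K \<in> boundary_components \<Omega>"
    using \<open>p \<in> S\<close> assms(2) unfolding K_def boundary_components_def
    by (auto simp: connected_component_in_connected_components_of)
  moreover have "S \<subseteq> K"
    unfolding K_def using assms(1,2) \<open>p \<in> S\<close>
    by (intro connected_component_of_maximal) (auto simp: connectedin_subtopology)
  ultimately show thesis
    using that by blast
qed

context
  fixes \<Omega> :: "riemann set"
  assumes domain: "circle_domain \<Omega>" and infinity: "None \<in> \<Omega>"
begin

lemma open_circle_domain: "openin sphtop \<Omega>"
  using domain by (simp add: circle_domain_def)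

lemma frontier_of_circle_domain: "sphtop frontier_of \<Omega> = sphtop closure_of \<Omega> - \<Omega>"
  using open_circle_domain by (simp add: frontier_of_def interior_of_openin)

lemma circle_domain_disjoint_cdisk:
  assumes i: "i \<in> circ_index \<Omega>"
  shows "\<Omega> \<inter> cdisk i = {}"
proof -
  have circle: "\<Omega> \<inter> Some ` sphere (fst i) (snd i) = {}"
    using circle_subset_frontier_of[OF i] frontier_of_circle_domain by blast
  then have "\<Omega> \<subseteq> disk i \<union> - cdisk i"
    using cdisk_eq_disk_Un_circle[of i] by blast
  moreover have "openin sphtop (- cdisk i)"
    using closedin_cdisk by (simp add: closedin_def Compl_eq_Diff_UNIV)
  moreover have "disk i \<inter> - cdisk i \<inter> \<Omega> = {}"
    using disk_subset_cdisk by blast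
  moreover have "- cdisk i \<inter> \<Omega> \<noteq> {}"
    using infinity by (auto simp: cdisk_def)
  ultimately have "disk i \<inter> \<Omega> = {}"
    using domain openin_disk[of i] unfolding circle_domain_def connectedin by blast
  then show ?thesis
    using circle cdisk_eq_disk_Un_circle[of i] by blast
qed

lemma circle_domain_closure_disjoint_disk:
  "i \<in> circ_index \<Omega> \<Longrightarrow> sphtop closure_of \<Omega> \<inter> disk i = {}"
  using openin_Int_closure_of_eq_empty[OF openin_disk] circle_domain_disjoint_cdisk
    disk_subset_cdisk by (metis disjoint_iff inf_commute subsetD)

lemma circle_domain_cdisk_disjoint:
  assumes i: "i \<in> circ_index \<Omega>" and j: "j \<in> circ_index \<Omega>" and "i \<noteq> j"
  shows "cdisk i \<inter> cdisk j = {}"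
proof -
  obtain c r c' r' where ij: "i = (c, r)" "j = (c', r')"
    by fastforce
  have r: "r > 0" "r' > 0"
    using circ_index_radius_pos i j ij by auto
  have "sphere c r \<noteq> sphere c' r'"
    using sphere_eq_sphereD r \<open>i \<noteq> j\<close> ij by blast
  then have "Some ` sphere c r \<noteq> Some ` sphere c' r'"
    by (simp add: inj_image_eq_iff)
  moreover have "Some ` sphere c r \<in> boundary_components \<Omega>"
    "Some ` sphere c' r' \<in> boundary_components \<Omega>"
    using i j ij by (simp_all add: circ_index_def)
  ultimately have "disjnt (Some ` sphere c r) (Some ` sphere c' r')"
    unfolding boundary_components_def by (simp add: connected_components_of_disjoint)
  then have spheres: "sphere c r \<inter> sphere c' r' = {}"
    by (auto simp: disjnt_def)
  have "Some ` sphere c r \<subseteq> sphtop closure_of \<Omega>" "Some ` sphere c' r' \<subseteq> sphtop closure_of \<Omega>"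
    using circle_subset_frontier_of[OF i] circle_subset_frontier_of[OF j] ij
      frontier_of_circle_domain by auto
  then have "Some ` sphere c r \<inter> disk j = {}" "Some ` sphere c' r' \<inter> disk i = {}"
    using circle_domain_closure_disjoint_disk[OF i] circle_domain_closure_disjoint_disk[OF j]
    by blast+
  then have "sphere c r \<inter> ball c' r' = {}" "sphere c' r' \<inter> ball c r = {}"
    by (simp_all add: disk_def ij image_Int[OF inj_Some, symmetric])
  moreover have "ball c' r' \<union> sphere c' r' = cball c' r'"
    by auto
  ultimately have "sphere c r \<inter> cball c' r' = {}"
    using spheres by blast
  then have "cball c r \<inter> cball c' r' = {}"
    using cball_disjoint_if_spheres_separated[OF less_imp_le[OF r(2)]]
      \<open>sphere c' r' \<inter> ball c r = {}\<close> by blast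
  then show ?thesis
    by (auto simp: cdisk_def ij)
qed

lemma boundary_component_point_or_circle:
  assumes "K \<in> boundary_components \<Omega>"
  obtains p where "K = {p}" | c r where "(c, r) \<in> circ_index \<Omega>" "K = Some ` sphere c r"
proof -
  have "None \<notin> K"
    using boundary_component_subset_frontier_of[OF assms] frontier_of_circle_domain infinity
    by blast
  have "geom_circle K \<or> (\<exists>p. K = {p})"
    using domain assms by (simp add: circle_domain_def)
  then show thesis
  proof
    assume "geom_circle K"
    then obtain c r where "r > 0" "K = Some ` sphere c r"
      using \<open>None \<notin> K\<close> unfolding geom_circle_def by blast
    then show thesis
      using assms that(2) by (simp add: circ_index_def)
  qed (use that(1) in blast)
qed

lemma circle_domain_surrounding_boundary_component:
  assumes "q \<notin> closure {z. Some z \<in> \<Omega>}"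
  obtains K F where "K \<in> boundary_components \<Omega>" "F \<noteq> {}" "Some ` F \<subseteq> K"
    "\<And>C. bounded C \<Longrightarrow> convex C \<Longrightarrow> F \<subseteq> C \<Longrightarrow> q \<in> C"
proof -
  define V where "V = {z. Some z \<in> \<Omega>}"
  have "connected V"
    using connected_vimage_Some open_circle_domain domain infinity V_def
    by (simp add: circle_domain_def)
  moreover have "bounded (- V)"
    using open_circle_domain infinity
    by (simp add: V_def openin_sphtop bounded_Compl_iff_eventually_at_infinity)
  ultimately obtain F where F: "connected F" "F \<noteq> {}" "F \<subseteq> frontier V"
    and surround: "\<And>C. bounded C \<Longrightarrow> convex C \<Longrightarrow> F \<subseteq> C \<Longrightarrow> q \<in> C"
    using frontier_part_surrounding_point[of V q] assms V_def by auto
  have "connectedin sphtop (Some ` F)"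
    using connectedin_continuous_map_image[OF continuous_map_Some] F(1) by simp
  moreover have "Some ` F \<subseteq> sphtop frontier_of \<Omega>"
    using F(3) Some_in_frontier_of_sphtop_iff V_def by auto
  ultimately obtain K where "K \<in> boundary_components \<Omega>" "Some ` F \<subseteq> K"
    using connected_subset_boundary_component F(2) by blast
  then show thesis
    using that F(2) surround by blast
qed

lemma circle_domain_closure_Un_disks:
  "sphtop closure_of \<Omega> \<union> \<Union>(disk ` circ_index \<Omega>) = UNIV"
proof -
  have "\<exists>i \<in> circ_index \<Omega>. p \<in> disk i" if p: "p \<notin> sphtop closure_of \<Omega>" for p
  proof -
    obtain q where q: "p = Some q"
      using p infinity closure_of_subset[of \<Omega> sphtop] by (cases p) auto
    then have "q \<notin> closure {z. Some z \<in> \<Omega>}"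
      using p Some_in_closure_of_sphtop_iff by simp
    then obtain K F where K: "K \<in> boundary_components \<Omega>" "F \<noteq> {}" "Some ` F \<subseteq> K"
      and surround: "\<And>C. bounded C \<Longrightarrow> convex C \<Longrightarrow> F \<subseteq> C \<Longrightarrow> q \<in> C"
      using circle_domain_surrounding_boundary_component by blast
    have "Some q \<notin> K"
      using K(1) boundary_component_subset_frontier_of frontier_of_circle_domain p q by auto
    obtain x where "x \<in> F"
      using K(2) by blast
    from K(1) show ?thesis
    proof (cases rule: boundary_component_point_or_circle)
      case (1 p0)
      then have "F \<subseteq> {x}"
        using K(3) \<open>x \<in> F\<close> by auto
      then have "q = x"
        using surround[of "{x}"] by simp
      then show ?thesis
        using \<open>x \<in> F\<close> K(3) \<open>Some q \<notin> K\<close> by auto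
    next
      case (2 c r)
      then have "F \<subseteq> cball c r"
        using K(3) sphere_cball by auto
      then have "q \<in> cball c r"
        using surround[of "cball c r"] by simp
      moreover have "q \<notin> sphere c r"
        using \<open>Some q \<notin> K\<close> 2 by auto
      ultimately have "p \<in> disk (c, r)"
        using q by (auto simp: disk_def)
      then show ?thesis
        using 2 by blast
    qed
  qed
  then show ?thesis
    by blast
qed

lemma circle_domain_schottky_domain: "schottky_domain (circ_index \<Omega>) \<Omega>"
  by unfold_locales
    (simp_all add: circ_index_radius_pos circle_domain_cdisk_disjoint open_circle_domain
      circle_domain_disjoint_cdisk circle_domain_closure_Un_disks)

end

theorem lemma7p2:
  fixes \<Omega> :: "riemann set" and k :: nat
  assumes "circle_domain \<Omega>" and "None \<in> \<Omega>"
  defines "J \<equiv> circ_index \<Omega>"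
  shows "sphtop closure_of (Omega_k \<Omega> k) =
           \<Union>{word_map ws ` (sphtop closure_of \<Omega>) | ws. reduced_word J ws \<and> length ws \<le> k}
    \<and> sphtop frontier_of (Omega_k \<Omega> k) =
           \<Union>{word_map ws ` (sphtop frontier_of \<Omega>) | ws. reduced_word J ws \<and> length ws \<le> k}
    \<and> UNIV - sphtop closure_of (Omega_k \<Omega> k) =
           \<Union>{word_map ws ` disk i | ws i. reduced_word J (ws @ [i]) \<and> length ws = k}
    \<and> (\<forall>ws i ws' i'. reduced_word J (ws @ [i]) \<longrightarrow> reduced_word J (ws' @ [i']) \<longrightarrow>
           length ws = k \<longrightarrow> length ws' = k \<longrightarrow> ws @ [i] \<noteq> ws' @ [i'] \<longrightarrow>
           word_map ws ` disk i \<inter> word_map ws' ` disk i' = {})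
    \<and> (\<forall>ws i j. reduced_word J (ws @ [i, j]) \<longrightarrow> length ws = k \<longrightarrow>
           sphtop closure_of (word_map (ws @ [i]) ` disk j) \<subseteq> word_map ws ` disk i)"
proof -
  interpret schottky_domain J \<Omega>
    unfolding J_def using assms(1,2) by (rule circle_domain_schottky_domain)
  have "Omega_k \<Omega> k = word_images_upto J k \<Omega>"
    by (simp add: Omega_k_def word_images_upto_def J_def)
  then show ?thesis
    using closure_of_word_images_upto[of k] frontier_of_word_images_upto[of k]
      Compl_closure_of_word_images_upto[of k] generation_disks_disjoint
      closure_of_generation_disk_subset
    unfolding word_images_upto_def generation_disks_def by auto
qed

end
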